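(* Let $e\geq 2$, $N=\langle\sigma\rangle$ cyclic of order $2^e$, and let $G$ be a transitive subgroup of $\mathrm{Hol}(N)$ of order $2^{e+1}$ that contains $\varphi_{1+2^{e-1}}$. Then $|C_G(\varphi_{1+2^{e-1}})|=2^e$. Moreover, for any $[\sigma^u,\varphi_{-1}]\in G$ with $u$ odd, we have $|C_G([\sigma^u,\varphi_{-1}])|\leq 2^e$, and this inequality is strict if and only if there exists $[\sigma^v,\varphi_b]\in G$ with $u(b-1)\not\equiv -2v\pmod{2^{e-1}}$.
   Context: For an odd integer $a$, $\varphi_a\in\mathrm{Aut}(N)$ is $\sigma\mapsto\sigma^a$. Elements of $\mathrm{Hol}(N)=N\rtimes\mathrm{Aut}(N)$ are written $[\sigma^u,\varphi_a]$ with $[\sigma^u,\varphi_a][\sigma^v,\varphi_b]=[\sigma^{u+va},\varphi_{ab}]$, and $\varphi_a$ denotes $[1,\varphi_a]$. $\mathrm{Hol}(N)$ acts on $N$ by $[\sigma^u,\varphi_a]\cdot\sigma^v=\sigma^{u+av}$; a subgroup is transitive if it acts transitively on $N$. $C_G(x)$ is the centraliser of $x$ in $G$. *)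

theory Defs
  imports "HOL-Algebra.Group" "HOL-Number_Theory.Cong"
begin

text \<open>N = <sigma> cyclic of order 2^e; sigma^u is encoded by u in {0..<2^e}.
  Aut(N) = {phi_a | a odd}, phi_a encoded by its residue a in {0..<2^e}.
  An element [sigma^u, phi_a] of Hol(N) is the pair (u, a).\<close>

definition hol :: "nat \<Rightarrow> (int \<times> int) monoid" where
  "hol e = \<lparr> carrier = {g. 0 \<le> fst g \<and> fst g < 2^e \<and> 0 \<le> snd g \<and> snd g < 2^e \<and> odd (snd g)},
             monoid.mult = (\<lambda>g h. ((fst g + fst h * snd g) mod 2^e, (snd g * snd h) mod 2^e)),
             monoid.one = (0, 1) \<rparr>"

definition hol_act :: "nat \<Rightarrow> int \<times> int \<Rightarrow> int \<Rightarrow> int" where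
  "hol_act e g v = (fst g + snd g * v) mod 2^e"

definition transitive_hol :: "nat \<Rightarrow> (int \<times> int) set \<Rightarrow> bool" where
  "transitive_hol e G \<longleftrightarrow>
     (\<forall>x \<in> {0..<2^e}. \<forall>y \<in> {0..<2^e}. \<exists>g \<in> G. hol_act e g x = y)"

definition phi :: "nat \<Rightarrow> int \<Rightarrow> int \<times> int" where
  "phi e a = (0, a mod 2^e)"

definition hol_elt :: "nat \<Rightarrow> int \<Rightarrow> int \<Rightarrow> int \<times> int" where
  "hol_elt e u a = (u mod 2^e, a mod 2^e)"

definition centraliser :: "('a, 'b) monoid_scheme \<Rightarrow> 'a set \<Rightarrow> 'a \<Rightarrow> 'a set" where
  "centraliser M H x = {g \<in> H. g \<otimes>\<^bsub>M\<^esub> x = x \<otimes>\<^bsub>M\<^esub> g}"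

end

theory Submission
  imports Defs "HOL-Algebra.Group_Action"
begin

text \<open>By orbit-stabiliser for the conjugation action of G on itself, |G| = |C_G(x)| * |x^G|.
  Conjugating [sigma^u, phi_a] by [sigma^v, phi_b] gives [sigma^(v + u b - a v), phi_a], so |x^G|
  is the number of residues mod 2^e of v + u b - a v over [sigma^v, phi_b] in G. The identity and
  a second element (one with v odd for x = phi_(1+2^(e-1)), and phi_(1+2^(e-1)) itself for
  x = [sigma^u, phi_(-1)]) contribute two residues differing by 2^(e-1). Hence there are exactly
  two residues if all of them agree mod 2^(e-1), and at least three otherwise. For
  x = phi_(1+2^(e-1)) the residues are -2^(e-1) v, which always agree; for x = [sigma^u, phi_(-1)]
  they are 2 v + u b, and agreement mod 2^(e-1) is the stated congruence.\<close>

lemma odd_mod_pow2_iff: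
  fixes x :: int
  assumes "e \<ge> 1"
  shows "odd (x mod 2^e) \<longleftrightarrow> odd x"
  using assms by (simp flip: take_bit_eq_mod)

lemma pow2_eq_double_pow2_pred:
  assumes "e \<ge> 1"
  shows "(2::int)^e = 2 * 2^(e-1)"
  using assms by (cases e) auto

lemma mod_pow2_cong_pred:
  fixes x :: int
  shows "[x mod 2^e = x] (mod 2^(e-1))"
  by (rule cong_dvd_modulus[of _ _ "2^e"]) (simp_all add: cong_def le_imp_power_dvd)

lemma cong_pow2_pred_cases:
  fixes s c :: int
  assumes e: "e \<ge> 1" and "[s = c] (mod 2^(e-1))"
  shows "[s = c] (mod 2^e) \<or> [s = c + 2^(e-1)] (mod 2^e)"
proof -
  note pow = pow2_eq_double_pow2_pred[OF e]
  obtain k where k: "s - c = 2^(e-1) * k"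
    using assms(2) by (auto simp: cong_iff_dvd_diff dvd_def)
  show ?thesis
  proof (cases "even k")
    case True
    then obtain j where "k = 2 * j" by blast
    then have "s - c = 2^e * j" using k pow by simp
    then show ?thesis by (simp add: cong_iff_dvd_diff)
  next
    case False
    then obtain j where "k = 2 * j + 1" using oddE by blast
    then have "s - (c + 2^(e-1)) = 2^e * j" using k pow by (simp add: algebra_simps)
    then show ?thesis by (metis cong_iff_dvd_diff dvd_triv_left)
  qed
qed

lemma card_image_mod_pow2:
  fixes f :: "'a \<Rightarrow> int"
  assumes e: "e \<ge> 1" and A: "finite A" "a \<in> A" "b \<in> A"
    and ab: "[f b = f a + 2^(e-1)] (mod 2^e)"
  shows "2 \<le> card ((\<lambda>x. f x mod 2^e) ` A)"
    and "card ((\<lambda>x. f x mod 2^e) ` A) = 2 \<longleftrightarrow> (\<forall>x\<in>A. [f x = f a] (mod 2^(e-1)))"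
proof -
  let ?R = "(\<lambda>x. f x mod 2^e) ` A"
  note pow = pow2_eq_double_pow2_pred[OF e]
  have coarse: "[y = z] (mod 2^(e-1))" if "[y = z] (mod 2^e)" for y z :: int
    using that by (rule cong_dvd_modulus) (simp add: pow)
  have b_coarse: "[f b = f a] (mod 2^(e-1))"
    using coarse[OF ab] by (simp add: cong_def)
  have "f a mod 2^e \<noteq> f b mod 2^e"
  proof
    assume "f a mod 2^e = f b mod 2^e"
    then have "[f a + 2^(e-1) = f a] (mod 2^e)"
      using ab by (simp add: cong_def)
    then have "2 * 2^(e-1) dvd (2::int)^(e-1)"
      by (simp add: cong_iff_dvd_diff pow)
    then show False by simp
  qed
  then have two: "card {f a mod 2^e, f b mod 2^e} = 2" by simp
  have sub: "{f a mod 2^e, f b mod 2^e} \<subseteq> ?R"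
    using A by blast
  show "2 \<le> card ?R"
    using card_mono[OF finite_imageI[OF A(1)] sub] two by simp
  show "card ?R = 2 \<longleftrightarrow> (\<forall>x\<in>A. [f x = f a] (mod 2^(e-1)))"
  proof
    assume card: "card ?R = 2"
    show "\<forall>x\<in>A. [f x = f a] (mod 2^(e-1))"
    proof (rule ccontr)
      assume "\<not> (\<forall>x\<in>A. [f x = f a] (mod 2^(e-1)))"
      then obtain x where x: "x \<in> A" "\<not> [f x = f a] (mod 2^(e-1))" by blast
      have "f x mod 2^e \<noteq> f a mod 2^e"
        using x(2) coarse unfolding cong_def by blast
      moreover have "f x mod 2^e \<noteq> f b mod 2^e"
      proof
        assume "f x mod 2^e = f b mod 2^e"
        then have "[f x = f b] (mod 2^e)"
          by (simp add: cong_def)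
        then have "[f x = f a] (mod 2^(e-1))"
          using coarse b_coarse by (blast intro: cong_trans)
        then show False
          using x(2) by blast
      qed
      ultimately have "card (insert (f x mod 2^e) {f a mod 2^e, f b mod 2^e}) = 3"
        using two by simp
      moreover have "card (insert (f x mod 2^e) {f a mod 2^e, f b mod 2^e}) \<le> card ?R"
        using sub x(1) by (intro card_mono finite_imageI A(1)) blast
      ultimately show False
        using card by simp
    qed
  next
    assume all: "\<forall>x\<in>A. [f x = f a] (mod 2^(e-1))"
    have "?R \<subseteq> {f a mod 2^e, f b mod 2^e}"
    proof
      fix r assume "r \<in> ?R"
      then obtain x where x: "x \<in> A" "r = f x mod 2^e" by blast
      from cong_pow2_pred_cases[OF e all[rule_format, OF x(1)]]
      show "r \<in> {f a mod 2^e, f b mod 2^e}"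
        using ab x(2) by (auto simp: cong_def)
    qed
    then show "card ?R = 2"
      using sub two by (simp add: subset_antisym)
  qed
qed

lemma double_le_of_mult_eq:
  fixes c r n :: nat
  assumes "c * r = n" "0 < n" "2 \<le> r"
  shows "2 * c \<le> n" and "2 * c < n \<longleftrightarrow> r \<noteq> 2"
proof -
  have "0 < c"
    using assms(1,2) by auto
  have "c * 2 \<le> c * r"
    using assms(3) by (rule mult_le_mono2)
  then show "2 * c \<le> n"
    using assms(1) by linarith
  have "c * 2 < c * r \<longleftrightarrow> r \<noteq> 2"
    using assms(3) \<open>0 < c\<close> by auto
  then show "2 * c < n \<longleftrightarrow> r \<noteq> 2"
    using assms(1) by (simp add: mult.commute)
qed

lemma (in group) card_centraliser_mult_card_conjugates:
  assumes H: "subgroup H G" and x: "x \<in> H"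
  shows "card (centraliser G H x) * card ((\<lambda>h. h \<otimes> x \<otimes> inv h) ` H) = card H"
proof -
  let ?H = "G\<lparr>carrier := H\<rparr>"
  let ?conj = "\<lambda>h. \<lambda>y \<in> H. h \<otimes> y \<otimes> inv\<^bsub>?H\<^esub> h"
  interpret H: group ?H using subgroup_imp_group[OF H] .
  interpret group_action ?H H ?conj
    using H.action_by_conjugation by simp
  have HG: "H \<subseteq> carrier G" using subgroup.subset[OF H] .
  have commute: "h \<otimes> x \<otimes> inv h = x \<longleftrightarrow> h \<otimes> x = x \<otimes> h" if "h \<in> H" for h
    using that x HG by (metis inv_solve_right m_closed subsetD)
  have "stabilizer ?H ?conj x = {h \<in> H. h \<otimes> x \<otimes> inv h = x}"
    unfolding stabilizer_def using x by (simp add: H cong: conj_cong)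
  also have "\<dots> = centraliser G H x"
    unfolding centraliser_def using commute by blast
  moreover have "orbit ?H ?conj x = (\<lambda>h. h \<otimes> x \<otimes> inv h) ` H"
    unfolding orbit_def using x H by (force simp: H)
  ultimately show ?thesis
    using orbit_stabilizer_theorem[OF x] by (simp add: order_def mult.commute)
qed

lemma hol_mult:
  "p \<otimes>\<^bsub>hol e\<^esub> q = ((fst p + fst q * snd p) mod 2^e, (snd p * snd q) mod 2^e)"
  by (simp add: hol_def)

lemma hol_one: "\<one>\<^bsub>hol e\<^esub> = (0, 1)"
  by (simp add: hol_def)

lemma mem_carrier_hol:
  "g \<in> carrier (hol e) \<longleftrightarrow>
     0 \<le> fst g \<and> fst g < 2^e \<and> 0 \<le> snd g \<and> snd g < 2^e \<and> odd (snd g)"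
  by (simp add: hol_def)

lemma hol_group:
  assumes "e \<ge> 1"
  shows "group (hol e)"
proof (rule groupI)
  fix x y z
  assume "x \<in> carrier (hol e)" "y \<in> carrier (hol e)" "z \<in> carrier (hol e)"
  have reduce: "(a + b mod m * c) mod m = (a + b * c) mod m" for a b c m :: int
    by (metis mod_add_right_eq mod_mult_left_eq)
  have "(fst x + (fst y + fst z * snd y) mod 2^e * snd x) mod 2^e
      = ((fst x + fst y * snd x) mod 2^e + snd x * snd y mod 2^e * fst z) mod 2^e"
    unfolding reduce by (simp add: mod_add_right_eq algebra_simps)
  then show "x \<otimes>\<^bsub>hol e\<^esub> y \<otimes>\<^bsub>hol e\<^esub> z = x \<otimes>\<^bsub>hol e\<^esub> (y \<otimes>\<^bsub>hol e\<^esub> z)"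
    by (simp add: hol_mult mod_mult_right_eq mult.commute mult.left_commute)
next
  fix x
  assume x: "x \<in> carrier (hol e)"
  then have "coprime (snd x) (2^e)"
    by (simp add: mem_carrier_hol)
  then obtain b where b: "[snd x * b = 1] (mod 2^e)"
    using cong_solve_coprime_int by blast
  define y where "y = (- fst x * (b mod 2^e) mod 2^e, b mod 2^e)"
  have "odd b"
    using b assms by (metis cong_def dvd_mult odd_mod_pow2_iff odd_one)
  then have "y \<in> carrier (hol e)"
    using assms by (simp add: y_def mem_carrier_hol odd_mod_pow2_iff)
  moreover have "y \<otimes>\<^bsub>hol e\<^esub> x = \<one>\<^bsub>hol e\<^esub>"
    using b assms unfolding hol_mult hol_one y_def cong_def
    by (simp add: mod_simps algebra_simps)
  ultimately show "\<exists>y\<in>carrier (hol e). y \<otimes>\<^bsub>hol e\<^esub> x = \<one>\<^bsub>hol e\<^esub>" by blast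
qed (use assms in \<open>auto simp: hol_mult hol_one mem_carrier_hol odd_mod_pow2_iff\<close>)

lemma hol_elt_fst_snd:
  assumes "g \<in> carrier (hol e)"
  shows "hol_elt e (fst g) (snd g) = g"
  using assms by (auto simp: hol_elt_def mem_carrier_hol)

lemma phi_one_plus_pow2_pred:
  assumes "e \<ge> 2"
  shows "phi e (1 + 2^(e-1)) = (0, 1 + 2^(e-1))"
proof -
  have "(1::int) < 2^(e-1)"
    using assms by simp
  then show ?thesis
    using pow2_eq_double_pow2_pred[of e] assms by (simp add: phi_def)
qed

lemma hol_conjugate:
  assumes e: "e \<ge> 1" and g: "g \<in> carrier (hol e)" and x: "x \<in> carrier (hol e)"
  shows "g \<otimes>\<^bsub>hol e\<^esub> x \<otimes>\<^bsub>hol e\<^esub> inv\<^bsub>hol e\<^esub> g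
           = ((fst g + fst x * snd g - snd x * fst g) mod 2^e, snd x)"
    (is "_ = ?y")
proof -
  interpret group "hol e" using hol_group[OF e] .
  have y: "?y \<in> carrier (hol e)"
    using x by (simp add: mem_carrier_hol)
  have "g \<otimes>\<^bsub>hol e\<^esub> x = ?y \<otimes>\<^bsub>hol e\<^esub> g"
    using g x by (simp add: hol_mult mem_carrier_hol mod_add_left_eq mult.commute)
  then show ?thesis
    using inv_solve_right[OF y m_closed[OF g x] g] by simp
qed

lemma hol_card_centraliser_mult_card_conjugates:
  assumes e: "e \<ge> 1" and G: "subgroup G (hol e)" and x: "x \<in> G"
  shows "card (centraliser (hol e) G x)
           * card ((\<lambda>g. (fst g + fst x * snd g - snd x * fst g) mod 2^e) ` G) = card G"
proof -
  interpret group "hol e" using hol_group[OF e] .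
  let ?r = "\<lambda>g. (fst g + fst x * snd g - snd x * fst g) mod 2^e"
  have xc: "x \<in> carrier (hol e)"
    using x subgroup.subset[OF G] by blast
  have "(\<lambda>g. g \<otimes>\<^bsub>hol e\<^esub> x \<otimes>\<^bsub>hol e\<^esub> inv\<^bsub>hol e\<^esub> g) ` G = (\<lambda>g. (?r g, snd x)) ` G"
    using hol_conjugate[OF e _ xc] subgroup.subset[OF G] by (intro image_cong) auto
  also have "\<dots> = (\<lambda>r. (r, snd x)) ` ?r ` G"
    by (simp add: image_image)
  also have "card \<dots> = card (?r ` G)"
    by (rule card_image) (simp add: inj_on_def)
  finally show ?thesis
    using card_centraliser_mult_card_conjugates[OF G x] by simp
qed

lemma conjugate_reflection_cong_iff:
  fixes u v b :: int
  shows "[v mod 2^e + u mod 2^e * (b mod 2^e) - (-1) mod 2^e * (v mod 2^e) = u mod 2^e]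
           (mod 2^(e-1))
         \<longleftrightarrow> [u * (b - 1) = - 2 * v] (mod 2^(e-1))"
proof -
  have lhs: "[v mod 2^e + u mod 2^e * (b mod 2^e) - (-1) mod 2^e * (v mod 2^e)
      = v + u * b - (-1) * v] (mod 2^(e-1))"
    by (intro cong_add cong_diff cong_mult mod_pow2_cong_pred)
  have rhs: "[u mod 2^e = u] (mod 2^(e-1))"
    by (rule mod_pow2_cong_pred)
  have "v + u * b - (-1) * v - u = u * (b - 1) - (- 2 * v)"
    by (simp add: algebra_simps)
  then have "[v + u * b - (-1) * v = u] (mod 2^(e-1)) \<longleftrightarrow> [u * (b - 1) = - 2 * v] (mod 2^(e-1))"
    by (simp only: cong_iff_dvd_diff)
  with lhs rhs show ?thesis
    by (simp add: cong_def)
qed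

lemma card_centraliser_phi:
  assumes e: "e \<ge> 2" and G: "subgroup G (hol e)" and fin: "finite G"
    and trans: "transitive_hol e G" and phi: "phi e (1 + 2^(e-1)) \<in> G"
  shows "2 * card (centraliser (hol e) G (phi e (1 + 2^(e-1)))) = card G"
proof -
  let ?P = "(2::int)^(e-1)"
  have e1: "e \<ge> 1" using e by simp
  note pow = pow2_eq_double_pow2_pred[OF e1]
  note psi = phi_one_plus_pow2_pred[OF e]
  obtain g1 where g1: "g1 \<in> G" "hol_act e g1 0 = 1"
    using trans e1 unfolding transitive_hol_def by fastforce
  then have "fst g1 = 1"
    using subgroup.subset[OF G] by (auto simp: hol_act_def mem_carrier_hol)
  let ?f = "\<lambda>g::int \<times> int. fst g + 0 * snd g - (1 + ?P) * fst g"
  have one: "(0, 1) \<in> G"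
    using subgroup.one_closed[OF G] by (simp add: hol_one)
  have "[?f g1 = ?f (0, 1) + ?P] (mod 2^e)"
    using \<open>fst g1 = 1\<close> by (simp add: cong_iff_dvd_diff pow)
  moreover have "\<forall>g\<in>G. [?f g = ?f (0, 1)] (mod 2^(e-1))"
    by (simp add: cong_iff_dvd_diff algebra_simps)
  ultimately have "card ((\<lambda>g. ?f g mod 2^e) ` G) = 2"
    using card_image_mod_pow2(2)[OF e1 fin one g1(1), where f = ?f] by blast
  moreover have "card (centraliser (hol e) G (0, 1 + ?P)) * card ((\<lambda>g. ?f g mod 2^e) ` G)
      = card G"
    using hol_card_centraliser_mult_card_conjugates[OF e1 G phi] unfolding psi fst_conv snd_conv .
  ultimately show ?thesis
    unfolding psi by simp
qed

lemma card_centraliser_reflection: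
  assumes e: "e \<ge> 2" and G: "subgroup G (hol e)" and fin: "finite G"
    and phi: "phi e (1 + 2^(e-1)) \<in> G" and u: "odd u" and x: "hol_elt e u (-1) \<in> G"
  shows "2 * card (centraliser (hol e) G (hol_elt e u (-1))) \<le> card G"
    and "2 * card (centraliser (hol e) G (hol_elt e u (-1))) < card G \<longleftrightarrow>
           (\<exists>v b. hol_elt e v b \<in> G \<and> \<not> [u * (b - 1) = - 2 * v] (mod 2^(e-1)))"
proof -
  let ?P = "(2::int)^(e-1)"
  let ?C = "centraliser (hol e) G (hol_elt e u (-1))"
  let ?f = "\<lambda>g::int \<times> int. fst g + u mod 2^e * snd g - (-1) mod 2^e * fst g"
  let ?R = "(\<lambda>g. ?f g mod 2^e) ` G"
  have e1: "e \<ge> 1" using e by simp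
  note pow = pow2_eq_double_pow2_pred[OF e1]
  note psi = phi_one_plus_pow2_pred[OF e]
  have one: "(0, 1) \<in> G"
    using subgroup.one_closed[OF G] by (simp add: hol_one)
  have count: "card ?C * card ?R = card G"
    using hol_card_centraliser_mult_card_conjugates[OF e1 G x] by (simp add: hol_elt_def)
  obtain k where k: "u mod 2^e = 2 * k + 1"
    using u e1 by (metis odd_mod_pow2_iff oddE)
  have "[(2 * k + 1) * (1 + ?P) = (2 * k + 1) + ?P] (mod 2^e)"
    by (simp add: cong_iff_dvd_diff pow algebra_simps)
  then have "[?f (0, 1 + ?P) = ?f (0, 1) + ?P] (mod 2^e)"
    by (simp add: k)
  note image = card_image_mod_pow2[OF e1 fin one phi[unfolded psi], where f = ?f, OF this]
  have "(\<forall>g\<in>G. [?f g = ?f (0, 1)] (mod 2^(e-1))) \<longleftrightarrow>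
        (\<forall>v b. hol_elt e v b \<in> G \<longrightarrow> [u * (b - 1) = - 2 * v] (mod 2^(e-1)))"
  proof -
    have repr: "hol_elt e (fst g) (snd g) = g" if "g \<in> G" for g
      using that subgroup.subset[OF G] by (blast intro: hol_elt_fst_snd)
    have pointwise: "[?f (hol_elt e v b) = ?f (0, 1)] (mod 2^(e-1))
        \<longleftrightarrow> [u * (b - 1) = - 2 * v] (mod 2^(e-1))" for v b
      using conjugate_reflection_cong_iff[where e = e] by (simp add: hol_elt_def)
    show ?thesis
      using repr pointwise by metis
  qed
  then have R2: "card ?R = 2 \<longleftrightarrow>
      \<not> (\<exists>v b. hol_elt e v b \<in> G \<and> \<not> [u * (b - 1) = - 2 * v] (mod 2^(e-1)))"
    using image(2) by simp
  have "card G > 0"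
    using one fin by (auto simp: card_gt_0_iff)
  note factor = double_le_of_mult_eq[OF count this image(1)]
  show "2 * card ?C \<le> card G"
    by (rule factor(1))
  show "2 * card ?C < card G \<longleftrightarrow>
      (\<exists>v b. hol_elt e v b \<in> G \<and> \<not> [u * (b - 1) = - 2 * v] (mod 2^(e-1)))"
    using factor(2) R2 by blast
qed

theorem lemma5p9:
  fixes e :: nat and G :: "(int \<times> int) set"
  assumes e2: "e \<ge> 2"
    and sub: "subgroup G (hol e)"
    and trans: "transitive_hol e G"
    and card: "card G = 2 ^ (e + 1)"
    and phiG: "phi e (1 + 2 ^ (e - 1)) \<in> G"
  shows "card (centraliser (hol e) G (phi e (1 + 2 ^ (e - 1)))) = 2 ^ e \<and>
         (\<forall>u::int. odd u \<and> hol_elt e u (-1) \<in> G \<longrightarrow>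
           card (centraliser (hol e) G (hol_elt e u (-1))) \<le> 2 ^ e \<and>
           (card (centraliser (hol e) G (hol_elt e u (-1))) < 2 ^ e \<longleftrightarrow>
             (\<exists>v b. hol_elt e v b \<in> G \<and>
                \<not> [u * (b - 1) = - 2 * v] (mod 2 ^ (e - 1)))))"
proof -
  have fin: "finite G"
    using card by (intro card_ge_0_finite) simp
  have card_double: "card G = 2 * 2 ^ e"
    using card by simp
  show ?thesis
    using card_centraliser_phi[OF e2 sub fin trans phiG]
      card_centraliser_reflection[OF e2 sub fin phiG]
    unfolding card_double by auto
qed

end
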